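(* Let $n\ge1$, $m=2^n$, let $\mathcal{B}$ be the boolean algebra of rank $r\ge1$, and let $A\subseteq\{0,1\}^n$ with $a=|A|$ and $m-a>r$. Let $Y=V_{\mathcal{B}}(S_A)$. For every $B$ with $A\subseteq B\subseteq\{0,1\}^n$ and $|B|=m-r$, put $Y_B=V_{\mathcal{B}}(S_B)$. Then (i) $Y=\bigcup_B Y_B$, the union over all such $B$; (ii) each $Y_B$ is irreducible over $\mathcal{B}$; (iii) $Y_B\not\subseteq Y_{B'}$ whenever $B\ne B'$. Consequently the sets $Y_B$ are exactly the irreducible components of $Y$, and $Y$ has $\binom{m-a}{r}$ irreducible components.
   Context: A finite boolean algebra of rank $r$ is (isomorphic to) the power set algebra of an $r$-element set, in the language $\{\vee,\cdot,\bar{\ },0,1\}$. Orthogonal variables: $Z=\{z_\alpha:\alpha\in\{0,1\}^n\}$, $|Z|=m=2^n$. For $A\subseteq\{0,1\}^n$ the orthogonal system is $$S_A=\{z_\alpha=0\mid\alpha\in A\}\cup\{z_\alpha z_\beta=0\mid \alpha\ne\beta\}\cup\{\textstyle\bigvee_{\alpha}z_\alpha=1\}.$$ $V_{\mathcal{B}}(S)\subseteq\mathcal{B}^m$ is the solution set of $S$. A subset of $\mathcal{B}^m$ is algebraic if it is the solution set of some system of equations $t=s$ ($t,s$ terms in $Z$). A nonempty algebraic set is irreducible if it is not a finite union of proper algebraic subsets. Every algebraic set $Y$ decomposes uniquely (up to order) as $Y=Y_1\cup\dots\cup Y_k$ with $Y_i$ irreducible and $Y_i\not\subseteq Y_j$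 for $i\ne j$; the $Y_i$ are the irreducible components of $Y$. *)

theory Defs
  imports Main "HOL-Library.FuncSet"
begin

datatype 'v bterm = Var 'v | Join "'v bterm" "'v bterm" | Meet "'v bterm" "'v bterm"
  | Compl "'v bterm" | Zero | One

text \<open>Evaluation in the power set algebra of U (the boolean algebra of rank card U).\<close>
primrec eval :: "'a set \<Rightarrow> ('v \<Rightarrow> 'a set) \<Rightarrow> 'v bterm \<Rightarrow> 'a set" where
  "eval U f (Var v) = f v"
| "eval U f (Join t s) = eval U f t \<union> eval U f s"
| "eval U f (Meet t s) = eval U f t \<inter> eval U f s"
| "eval U f (Compl t) = U - eval U f t"
| "eval U f Zero = {}"
| "eval U f One = U"

text \<open>Index set {0,1}^n, encoded as boolean lists of length n.\<close>
definition Idx :: "nat \<Rightarrow> bool list set" where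
  "Idx n = {xs. length xs = n}"

primrec idx_list :: "nat \<Rightarrow> bool list list" where
  "idx_list 0 = [[]]"
| "idx_list (Suc n) = concat (map (\<lambda>x. [False # x, True # x]) (idx_list n))"

definition bigjoin :: "nat \<Rightarrow> bool list bterm" where
  "bigjoin n = foldr Join (map Var (idx_list n)) Zero"

text \<open>The affine space B^m, m = 2^n: tuples indexed by Idx n with entries in Pow U.\<close>
definition space :: "'a set \<Rightarrow> nat \<Rightarrow> (bool list \<Rightarrow> 'a set) set" where
  "space U n = PiE (Idx n) (\<lambda>_. Pow U)"

definition sol :: "'a set \<Rightarrow> nat \<Rightarrow> (bool list bterm \<times> bool list bterm) set
    \<Rightarrow> (bool list \<Rightarrow> 'a set) set" where
  "sol U n E = {f \<in> space U n. \<forall>(t, s) \<in> E. eval U f t = eval U f s}"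

definition algebraic :: "'a set \<Rightarrow> nat \<Rightarrow> (bool list \<Rightarrow> 'a set) set \<Rightarrow> bool" where
  "algebraic U n Y \<longleftrightarrow> (\<exists>E. (\<forall>(t, s) \<in> E. set_bterm t \<subseteq> Idx n \<and> set_bterm s \<subseteq> Idx n)
      \<and> Y = sol U n E)"

definition irreducible_alg :: "'a set \<Rightarrow> nat \<Rightarrow> (bool list \<Rightarrow> 'a set) set \<Rightarrow> bool" where
  "irreducible_alg U n Y \<longleftrightarrow> Y \<noteq> {} \<and> algebraic U n Y \<and>
     \<not> (\<exists>F. finite F \<and> (\<forall>X \<in> F. algebraic U n X \<and> X \<subset> Y) \<and> \<Union>F = Y)"

definition irred_decomp :: "'a set \<Rightarrow> nat \<Rightarrow> (bool list \<Rightarrow> 'a set) set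
    \<Rightarrow> (bool list \<Rightarrow> 'a set) set set \<Rightarrow> bool" where
  "irred_decomp U n Y C \<longleftrightarrow> finite C \<and> (\<forall>X \<in> C. irreducible_alg U n X) \<and> \<Union>C = Y
     \<and> (\<forall>X \<in> C. \<forall>X' \<in> C. X \<noteq> X' \<longrightarrow> \<not> X \<subseteq> X')"

text \<open>The irreducible components: the (unique) irredundant irreducible decomposition.\<close>
definition irreducible_components :: "'a set \<Rightarrow> nat \<Rightarrow> (bool list \<Rightarrow> 'a set) set
    \<Rightarrow> (bool list \<Rightarrow> 'a set) set set" where
  "irreducible_components U n Y = (THE C. irred_decomp U n Y C)"

definition ortho_sys :: "nat \<Rightarrow> bool list set \<Rightarrow> (bool list bterm \<times> bool list bterm) set" where
  "ortho_sys n A =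
     {(Var \<alpha>, Zero) | \<alpha>. \<alpha> \<in> A}
   \<union> {(Meet (Var \<alpha>) (Var \<beta>), Zero) | \<alpha> \<beta>. \<alpha> \<in> Idx n \<and> \<beta> \<in> Idx n \<and> \<alpha> \<noteq> \<beta>}
   \<union> {(bigjoin n, One)}"

end

theory Submission
  imports Defs
begin

text \<open>A point of V(S_B) is an ordered partition of U into blocks indexed by {0,1}^n - B,
i.e. the family of fibres of a map phi from U to {0,1}^n - B. A boolean equation holds in a
power set algebra iff it holds at every atom u, and there only the set of coordinates containing
u matters; for a fibre point this is the single index phi u. Hence the fibre point of a
surjective phi satisfies every equation that holds at any point of V(S_B), so it lies in no
proper algebraic subset, and V(S_B) is irreducible when |{0,1}^n - B| = r. A solution of S_A
has at most r nonempty blocks, so it lies in some V(S_B); and the fibre point of a constant map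
separates V(S_B) from V(S_B').\<close>

lemma set_idx_list: "set (idx_list n) = Idx n"
proof (induction n)
  case 0
  then show ?case by (auto simp: Idx_def)
next
  case (Suc n)
  show ?case
  proof
    show "set (idx_list (Suc n)) \<subseteq> Idx (Suc n)" using Suc by (auto simp: Idx_def)
    show "Idx (Suc n) \<subseteq> set (idx_list (Suc n))"
    proof
      fix xs assume "xs \<in> Idx (Suc n)"
      then obtain b ys where xs: "xs = b # ys" "length ys = n"
        by (cases xs) (auto simp: Idx_def)
      then have "ys \<in> set (idx_list n)" using Suc by (auto simp: Idx_def)
      then show "xs \<in> set (idx_list (Suc n))" using xs by (cases b) auto
    qed
  qed
qed

lemma card_Idx: "card (Idx n) = 2 ^ n"
proof -
  have "Idx n = {xs. set xs \<subseteq> (UNIV :: bool set) \<and> length xs = n}" by (auto simp: Idx_def)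
  then show ?thesis using card_lists_length_eq[of "UNIV :: bool set" n] by simp
qed

lemma finite_Idx: "finite (Idx n)"
  using card_Idx[of n] by (metis card.infinite power_not_zero zero_neq_numeral)

lemma eval_foldr_Join_Var: "eval U f (foldr Join (map Var l) Zero) = \<Union> (f ` set l)"
  by (induction l) auto

lemma set_bterm_foldr_Join_Var: "set_bterm (foldr Join (map Var l) Zero) = set l"
  by (induction l) auto

lemma eval_bigjoin: "eval U f (bigjoin n) = (\<Union>\<alpha>\<in>Idx n. f \<alpha>)"
  by (simp add: bigjoin_def eval_foldr_Join_Var set_idx_list)

lemma set_bterm_bigjoin: "set_bterm (bigjoin n) = Idx n"
  by (simp add: bigjoin_def set_bterm_foldr_Join_Var set_idx_list)

lemma eval_subset:
  "f \<in> space U n \<Longrightarrow> set_bterm t \<subseteq> Idx n \<Longrightarrow> eval U f t \<subseteq> U"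
  by (induction t) (auto simp: space_def)

lemma eval_mem_cong:
  "u \<in> U \<Longrightarrow> v \<in> U \<Longrightarrow> \<forall>\<alpha>\<in>set_bterm t. u \<in> f \<alpha> \<longleftrightarrow> v \<in> g \<alpha>
    \<Longrightarrow> u \<in> eval U f t \<longleftrightarrow> v \<in> eval U g t"
  by (induction t) auto

lemma mem_sol_if_atom_patterns_occur:
  assumes g: "g \<in> sol U n E" and h: "h \<in> space U n"
    and E: "\<forall>(t, s)\<in>E. set_bterm t \<subseteq> Idx n \<and> set_bterm s \<subseteq> Idx n"
    and patterns: "\<forall>u\<in>U. \<exists>v\<in>U. \<forall>\<alpha>\<in>Idx n. u \<in> h \<alpha> \<longleftrightarrow> v \<in> g \<alpha>"
  shows "h \<in> sol U n E"
proof -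
  have "eval U h t = eval U h s" if ts: "(t, s) \<in> E" for t s
  proof -
    have t: "set_bterm t \<subseteq> Idx n" and s: "set_bterm s \<subseteq> Idx n" using E ts by auto
    have "u \<in> eval U h t \<longleftrightarrow> u \<in> eval U h s" if u: "u \<in> U" for u
    proof -
      obtain v where v: "v \<in> U" and uv: "\<forall>\<alpha>\<in>Idx n. u \<in> h \<alpha> \<longleftrightarrow> v \<in> g \<alpha>"
        using patterns u by blast
      have "u \<in> eval U h t \<longleftrightarrow> v \<in> eval U g t"
        by (rule eval_mem_cong[OF u v]) (use uv t in blast)
      also have "\<dots> \<longleftrightarrow> v \<in> eval U g s" using g ts by (auto simp: sol_def)
      also have "\<dots> \<longleftrightarrow> u \<in> eval U h s"
        by (rule eval_mem_cong[OF u v, symmetric]) (use uv s in blast)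
      finally show ?thesis .
    qed
    then show ?thesis using eval_subset[OF h t] eval_subset[OF h s] by blast
  qed
  then show ?thesis using h by (auto simp: sol_def)
qed

lemma algebraic_Int:
  assumes "algebraic U n X" and "algebraic U n X'"
  shows "algebraic U n (X \<inter> X')"
proof -
  obtain E where E: "\<forall>(t, s)\<in>E. set_bterm t \<subseteq> Idx n \<and> set_bterm s \<subseteq> Idx n" "X = sol U n E"
    using assms(1) unfolding algebraic_def by blast
  obtain E' where E': "\<forall>(t, s)\<in>E'. set_bterm t \<subseteq> Idx n \<and> set_bterm s \<subseteq> Idx n" "X' = sol U n E'"
    using assms(2) unfolding algebraic_def by blast
  have "X \<inter> X' = sol U n (E \<union> E')" using E(2) E'(2) unfolding sol_def by auto
  moreover have "\<forall>(t, s)\<in>E \<union> E'. set_bterm t \<subseteq> Idx n \<and> set_bterm s \<subseteq> Idx n"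
    using E(1) E'(1) by blast
  ultimately show ?thesis unfolding algebraic_def by blast
qed

lemma irreducible_algI_generic_point:
  assumes "algebraic U n Y" and "g \<in> Y"
    and generic: "\<And>X. algebraic U n X \<Longrightarrow> X \<subseteq> Y \<Longrightarrow> g \<in> X \<Longrightarrow> X = Y"
  shows "irreducible_alg U n Y"
  unfolding irreducible_alg_def
proof (intro conjI)
  show "Y \<noteq> {}" "algebraic U n Y" using assms(1,2) by auto
  show "\<not> (\<exists>F. finite F \<and> (\<forall>X\<in>F. algebraic U n X \<and> X \<subset> Y) \<and> \<Union> F = Y)"
  proof
    assume "\<exists>F. finite F \<and> (\<forall>X\<in>F. algebraic U n X \<and> X \<subset> Y) \<and> \<Union> F = Y"
    then obtain F where F: "\<forall>X\<in>F. algebraic U n X \<and> X \<subset> Y" "\<Union> F = Y" by blast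
    then obtain X where "X \<in> F" "g \<in> X" using \<open>g \<in> Y\<close> by blast
    then show False using F generic[of X] by blast
  qed
qed

lemma irreducible_alg_subset_UnionD:
  assumes irr: "irreducible_alg U n X" and "finite F" and F: "\<forall>X'\<in>F. algebraic U n X'"
    and cover: "X \<subseteq> \<Union>F"
  shows "\<exists>X'\<in>F. X \<subseteq> X'"
proof (rule ccontr)
  assume no: "\<not> (\<exists>X'\<in>F. X \<subseteq> X')"
  let ?G = "(\<lambda>X'. X \<inter> X') ` F"
  have "algebraic U n X" using irr unfolding irreducible_alg_def by blast
  have "algebraic U n Z \<and> Z \<subset> X" if "Z \<in> ?G" for Z
  proof -
    obtain X' where "X' \<in> F" "Z = X \<inter> X'" using \<open>Z \<in> ?G\<close> by blast
    then show ?thesis using algebraic_Int[OF \<open>algebraic U n X\<close>] F no by blast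
  qed
  moreover have "finite ?G" using \<open>finite F\<close> by simp
  moreover have "\<Union>?G = X" using cover by blast
  ultimately show False using irr unfolding irreducible_alg_def by blast
qed

lemma irreducible_components_eqI:
  assumes C: "irred_decomp U n Y C"
  shows "irreducible_components U n Y = C"
  unfolding irreducible_components_def
proof (rule the_equality)
  show "irred_decomp U n Y C" by (fact C)
  have "D \<subseteq> C" if D: "irred_decomp U n Y D" and C: "irred_decomp U n Y C" for C D
  proof
    have refines: "\<exists>X'\<in>C'. X \<subseteq> X'"
      if C: "irred_decomp U n Y C" and C': "irred_decomp U n Y C'" and "X \<in> C" for C C' X
    proof (rule irreducible_alg_subset_UnionD)
      show "irreducible_alg U n X" using C \<open>X \<in> C\<close> by (simp add: irred_decomp_def)
      show "finite C'" "\<forall>X'\<in>C'. algebraic U n X'"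
        using C' by (simp_all add: irred_decomp_def irreducible_alg_def)
      show "X \<subseteq> \<Union>C'" using C C' \<open>X \<in> C\<close> by (auto simp: irred_decomp_def)
    qed
    fix X assume X: "X \<in> D"
    obtain X' where X': "X' \<in> C" "X \<subseteq> X'" using refines[OF D C X] by blast
    obtain X'' where X'': "X'' \<in> D" "X' \<subseteq> X''" using refines[OF C D X'(1)] by blast
    have "X = X''" using D X X'' X' unfolding irred_decomp_def by blast
    then show "X \<in> C" using X' X'' by auto
  qed
  then show "D = C" if "irred_decomp U n Y D" for D using that C by blast
qed

lemma irreducible_components_image:
  assumes "finite I" and Y: "Y = (\<Union>i\<in>I. Z i)"
    and irreducible: "\<forall>i\<in>I. irreducible_alg U n (Z i)"
    and incomparable: "\<forall>i\<in>I. \<forall>j\<in>I. i \<noteq> j \<longrightarrow> \<not> Z i \<subseteq> Z j"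
  shows "irreducible_components U n Y = Z ` I"
    and "card (irreducible_components U n Y) = card I"
proof -
  have "irred_decomp U n Y (Z ` I)"
    unfolding irred_decomp_def
  proof (intro conjI ballI impI)
    show "finite (Z ` I)" using \<open>finite I\<close> by simp
    show "\<Union> (Z ` I) = Y" using Y by simp
    show "irreducible_alg U n X" if "X \<in> Z ` I" for X using that irreducible by blast
    fix X X' assume "X \<in> Z ` I" "X' \<in> Z ` I" "X \<noteq> X'"
    then obtain i j where "i \<in> I" "j \<in> I" "X = Z i" "X' = Z j" "i \<noteq> j" by blast
    then show "\<not> X \<subseteq> X'" using incomparable by simp
  qed
  then show components: "irreducible_components U n Y = Z ` I"
    by (rule irreducible_components_eqI)
  have "inj_on Z I"
  proof (rule inj_onI)
    fix i j assume "i \<in> I" "j \<in> I" "Z i = Z j"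
    then show "i = j" using incomparable by blast
  qed
  then show "card (irreducible_components U n Y) = card I"
    unfolding components by (rule card_image)
qed

lemma mem_sol_ortho_sys_iff:
  "f \<in> sol U n (ortho_sys n B) \<longleftrightarrow> f \<in> space U n \<and> (\<forall>\<alpha>\<in>B. f \<alpha> = {})
    \<and> (\<forall>\<alpha>\<in>Idx n. \<forall>\<beta>\<in>Idx n. \<alpha> \<noteq> \<beta> \<longrightarrow> f \<alpha> \<inter> f \<beta> = {}) \<and> (\<Union>\<alpha>\<in>Idx n. f \<alpha>) = U"
proof -
  have "(\<forall>(t, s)\<in>ortho_sys n B. P t s) \<longleftrightarrow> (\<forall>\<alpha>\<in>B. P (Var \<alpha>) Zero)
      \<and> (\<forall>\<alpha>\<in>Idx n. \<forall>\<beta>\<in>Idx n. \<alpha> \<noteq> \<beta> \<longrightarrow> P (Meet (Var \<alpha>) (Var \<beta>)) Zero) \<and> P (bigjoin n) One"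
    for P :: "bool list bterm \<Rightarrow> bool list bterm \<Rightarrow> bool"
    unfolding ortho_sys_def by blast
  then show ?thesis unfolding sol_def by (simp add: eval_bigjoin)
qed

lemma sol_ortho_sys_antimono:
  "A \<subseteq> B \<Longrightarrow> sol U n (ortho_sys n B) \<subseteq> sol U n (ortho_sys n A)"
  unfolding mem_sol_ortho_sys_iff subset_iff by blast

lemma algebraic_sol_ortho_sys:
  assumes "B \<subseteq> Idx n"
  shows "algebraic U n (sol U n (ortho_sys n B))"
proof -
  have "\<forall>(t, s)\<in>ortho_sys n B. set_bterm t \<subseteq> Idx n \<and> set_bterm s \<subseteq> Idx n"
    using assms by (auto simp: ortho_sys_def set_bterm_bigjoin)
  then show ?thesis unfolding algebraic_def by blast
qed

definition fibre_point :: "'a set \<Rightarrow> nat \<Rightarrow> ('a \<Rightarrow> bool list) \<Rightarrow> bool list \<Rightarrow> 'a set" where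
  "fibre_point U n \<phi> = restrict (\<lambda>\<alpha>. {x \<in> U. \<phi> x = \<alpha>}) (Idx n)"

lemma mem_fibre_point:
  "\<alpha> \<in> Idx n \<Longrightarrow> x \<in> fibre_point U n \<phi> \<alpha> \<longleftrightarrow> x \<in> U \<and> \<phi> x = \<alpha>"
  by (simp add: fibre_point_def)

lemma fibre_point_in_sol_ortho_sys:
  assumes B: "B \<subseteq> Idx n" and \<phi>: "\<phi> ` U \<subseteq> Idx n - B"
  shows "fibre_point U n \<phi> \<in> sol U n (ortho_sys n B)"
  unfolding mem_sol_ortho_sys_iff
proof (intro conjI ballI impI)
  show "fibre_point U n \<phi> \<in> space U n" by (auto simp: space_def fibre_point_def)
  show "fibre_point U n \<phi> \<alpha> = {}" if "\<alpha> \<in> B" for \<alpha>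
  proof -
    have "\<alpha> \<in> Idx n" using that B by blast
    then show ?thesis using that \<phi> by (auto simp: mem_fibre_point image_subset_iff)
  qed
  show "fibre_point U n \<phi> \<alpha> \<inter> fibre_point U n \<phi> \<beta> = {}"
    if "\<alpha> \<in> Idx n" "\<beta> \<in> Idx n" "\<alpha> \<noteq> \<beta>" for \<alpha> \<beta>
    using that by (auto simp: mem_fibre_point)
  show "(\<Union>\<alpha>\<in>Idx n. fibre_point U n \<phi> \<alpha>) = U"
    using \<phi> by (auto simp: mem_fibre_point)
qed

lemma eq_fibre_pointI:
  assumes f: "f \<in> space U n"
    and disjoint: "\<forall>\<alpha>\<in>Idx n. \<forall>\<beta>\<in>Idx n. \<alpha> \<noteq> \<beta> \<longrightarrow> f \<alpha> \<inter> f \<beta> = {}"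
    and \<phi>: "\<And>x. x \<in> U \<Longrightarrow> \<phi> x \<in> Idx n \<and> x \<in> f (\<phi> x)"
  shows "f = fibre_point U n \<phi>"
proof
  fix \<alpha>
  show "f \<alpha> = fibre_point U n \<phi> \<alpha>"
  proof (cases "\<alpha> \<in> Idx n")
    case True
    have "f \<alpha> \<subseteq> U" using PiE_mem[OF f[unfolded space_def] True] by simp
    have fibre: "x \<in> f \<alpha> \<longleftrightarrow> x \<in> U \<and> \<phi> x = \<alpha>" for x
    proof
      assume x: "x \<in> f \<alpha>"
      with \<open>f \<alpha> \<subseteq> U\<close> have "x \<in> U" by blast
      moreover have "\<phi> x = \<alpha>"
      proof (rule ccontr)
        assume "\<phi> x \<noteq> \<alpha>"
        then have "f (\<phi> x) \<inter> f \<alpha> = {}" using disjoint \<phi>[OF \<open>x \<in> U\<close>] True by auto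
        then show False using \<phi>[OF \<open>x \<in> U\<close>] x by auto
      qed
      ultimately show "x \<in> U \<and> \<phi> x = \<alpha>" ..
    next
      assume "x \<in> U \<and> \<phi> x = \<alpha>"
      then show "x \<in> f \<alpha>" using \<phi> by auto
    qed
    show ?thesis by (rule set_eqI) (simp only: fibre mem_fibre_point[OF True])
  next
    case False
    then show ?thesis using PiE_arb[OF f[unfolded space_def] False] by (simp add: fibre_point_def)
  qed
qed

lemma sol_ortho_sys_fibre_pointE:
  assumes "f \<in> sol U n (ortho_sys n B)"
  obtains \<phi> where "\<phi> ` U \<subseteq> Idx n - B" and "f = fibre_point U n \<phi>"
proof -
  have f: "f \<in> space U n" "\<forall>\<alpha>\<in>B. f \<alpha> = {}"
    "\<forall>\<alpha>\<in>Idx n. \<forall>\<beta>\<in>Idx n. \<alpha> \<noteq> \<beta> \<longrightarrow> f \<alpha> \<inter> f \<beta> = {}" "(\<Union>\<alpha>\<in>Idx n. f \<alpha>) = U"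
    using assms by (simp_all add: mem_sol_ortho_sys_iff)
  define \<phi> where "\<phi> x = (SOME \<alpha>. \<alpha> \<in> Idx n \<and> x \<in> f \<alpha>)" for x
  have \<phi>: "\<phi> x \<in> Idx n \<and> x \<in> f (\<phi> x)" if "x \<in> U" for x
  proof -
    have "\<exists>\<alpha>. \<alpha> \<in> Idx n \<and> x \<in> f \<alpha>" using that f(4) by auto
    then show ?thesis unfolding \<phi>_def by (rule someI_ex)
  qed
  have "\<phi> ` U \<subseteq> Idx n - B" using \<phi> f(2) by fastforce
  moreover have "f = fibre_point U n \<phi>" using eq_fibre_pointI[OF f(1,3) \<phi>] .
  ultimately show ?thesis by (rule that)
qed

lemma algebraic_subset_sol_ortho_sys_eq:
  assumes B: "B \<subseteq> Idx n" and onto: "\<phi> ` U = Idx n - B"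
    and X: "algebraic U n X" "X \<subseteq> sol U n (ortho_sys n B)" "fibre_point U n \<phi> \<in> X"
  shows "X = sol U n (ortho_sys n B)"
proof
  show "X \<subseteq> sol U n (ortho_sys n B)" by (fact X(2))
  obtain E where E: "\<forall>(t, s)\<in>E. set_bterm t \<subseteq> Idx n \<and> set_bterm s \<subseteq> Idx n"
    and X_eq: "X = sol U n E" using X(1) unfolding algebraic_def by blast
  show "sol U n (ortho_sys n B) \<subseteq> X"
  proof
    fix h assume "h \<in> sol U n (ortho_sys n B)"
    then obtain \<psi> where \<psi>: "\<psi> ` U \<subseteq> Idx n - B" and h: "h = fibre_point U n \<psi>"
      by (rule sol_ortho_sys_fibre_pointE)
    have "\<exists>v\<in>U. \<forall>\<alpha>\<in>Idx n. u \<in> h \<alpha> \<longleftrightarrow> v \<in> fibre_point U n \<phi> \<alpha>" if u: "u \<in> U" for u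
    proof -
      have "\<psi> u \<in> \<phi> ` U" using \<psi> onto u by blast
      then obtain v where "\<psi> u = \<phi> v" "v \<in> U" by (rule imageE)
      then show ?thesis using u by (auto simp: h mem_fibre_point)
    qed
    moreover have "h \<in> space U n" using \<open>h \<in> sol U n (ortho_sys n B)\<close> by (simp add: sol_def)
    moreover have "fibre_point U n \<phi> \<in> sol U n E" using X(3) X_eq by blast
    ultimately show "h \<in> X" unfolding X_eq using mem_sol_if_atom_patterns_occur E by blast
  qed
qed

lemma irreducible_sol_ortho_sys:
  assumes B: "B \<subseteq> Idx n" and "finite U" and "card (Idx n - B) = card U"
  shows "irreducible_alg U n (sol U n (ortho_sys n B))"
proof -
  obtain \<phi> where "bij_betw \<phi> U (Idx n - B)"
    using finite_same_card_bij[of U "Idx n - B"] assms finite_Idx by (metis finite_Diff)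
  then have onto: "\<phi> ` U = Idx n - B" by (simp add: bij_betw_def)
  have point: "fibre_point U n \<phi> \<in> sol U n (ortho_sys n B)"
    by (rule fibre_point_in_sol_ortho_sys[OF B]) (simp add: onto)
  show ?thesis
    by (rule irreducible_algI_generic_point[OF algebraic_sol_ortho_sys[OF B] point
          algebraic_subset_sol_ortho_sys_eq[OF B onto]])
qed

lemma sol_ortho_sys_eq_Union:
  assumes "finite U" and A: "A \<subseteq> Idx n" and "card U \<le> card (Idx n - A)"
  shows "sol U n (ortho_sys n A)
    = (\<Union>B \<in> {B. A \<subseteq> B \<and> B \<subseteq> Idx n \<and> card B = 2 ^ n - card U}. sol U n (ortho_sys n B))"
proof
  show "(\<Union>B \<in> {B. A \<subseteq> B \<and> B \<subseteq> Idx n \<and> card B = 2 ^ n - card U}. sol U n (ortho_sys n B))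
      \<subseteq> sol U n (ortho_sys n A)"
    using sol_ortho_sys_antimono by blast
  show "sol U n (ortho_sys n A)
      \<subseteq> (\<Union>B \<in> {B. A \<subseteq> B \<and> B \<subseteq> Idx n \<and> card B = 2 ^ n - card U}. sol U n (ortho_sys n B))"
  proof
    fix f assume "f \<in> sol U n (ortho_sys n A)"
    then obtain \<phi> where \<phi>: "\<phi> ` U \<subseteq> Idx n - A" and f: "f = fibre_point U n \<phi>"
      by (rule sol_ortho_sys_fibre_pointE)
    obtain C where C: "\<phi> ` U \<subseteq> C" "C \<subseteq> Idx n - A" "card C = card U"
      using exists_subset_between[OF card_image_le[OF \<open>finite U\<close>] assms(3) \<phi>]
        finite_Diff[OF finite_Idx] by blast
    have "C \<subseteq> Idx n" "finite C" using C(2) finite_Idx finite_subset by blast+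
    then have "card (Idx n - C) = 2 ^ n - card U" using card_Diff_subset C(3) card_Idx by metis
    then have "Idx n - C \<in> {B. A \<subseteq> B \<and> B \<subseteq> Idx n \<and> card B = 2 ^ n - card U}"
      using C(2) A by auto
    moreover have "f \<in> sol U n (ortho_sys n (Idx n - C))"
      unfolding f by (rule fibre_point_in_sol_ortho_sys) (use C(1) \<open>C \<subseteq> Idx n\<close> in auto)
    ultimately show "f \<in> (\<Union>B \<in> {B. A \<subseteq> B \<and> B \<subseteq> Idx n \<and> card B = 2 ^ n - card U}.
        sol U n (ortho_sys n B))" by (rule UN_I)
  qed
qed

lemma sol_ortho_sys_incomparable:
  assumes "U \<noteq> {}" and B: "B \<subseteq> Idx n" "B' \<subseteq> Idx n"
    and "card B = card B'" and "B \<noteq> B'"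
  shows "\<not> sol U n (ortho_sys n B) \<subseteq> sol U n (ortho_sys n B')"
proof -
  have "\<not> B' \<subseteq> B"
  proof
    assume "B' \<subseteq> B"
    then have "B' = B"
      using card_subset_eq[OF finite_subset[OF B(1) finite_Idx]] assms(4) by simp
    then show False using assms(5) by simp
  qed
  then obtain \<alpha> where \<alpha>: "\<alpha> \<in> Idx n - B" "\<alpha> \<in> B'" using B(2) by blast
  have "fibre_point U n (\<lambda>_. \<alpha>) \<in> sol U n (ortho_sys n B)"
    by (rule fibre_point_in_sol_ortho_sys[OF B(1)]) (use \<alpha>(1) in auto)
  moreover have "fibre_point U n (\<lambda>_. \<alpha>) \<alpha> \<noteq> {}"
    using assms(1) \<alpha>(1) by (auto simp: mem_fibre_point)
  then have "fibre_point U n (\<lambda>_. \<alpha>) \<notin> sol U n (ortho_sys n B')"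
    using \<alpha>(2) unfolding mem_sol_ortho_sys_iff by blast
  ultimately show ?thesis by blast
qed

lemma card_supersets_of_card:
  assumes I: "finite I" and A: "A \<subseteq> I" and r: "r \<le> card I"
  shows "card {B. A \<subseteq> B \<and> B \<subseteq> I \<and> card B = card I - r} = (card I - card A) choose r"
proof -
  have card_compl: "card (I - C) = card I - card C" if "C \<subseteq> I" for C
    using that I by (simp add: card_Diff_subset finite_subset)
  have "bij_betw (\<lambda>B. I - B) {B. A \<subseteq> B \<and> B \<subseteq> I \<and> card B = card I - r}
      {C. C \<subseteq> I - A \<and> card C = r}"
  proof (rule bij_betw_byWitness[of _ "\<lambda>C. I - C"])
    show "(\<lambda>B. I - B) ` {B. A \<subseteq> B \<and> B \<subseteq> I \<and> card B = card I - r}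
        \<subseteq> {C. C \<subseteq> I - A \<and> card C = r}"
    proof
      fix C assume "C \<in> (\<lambda>B. I - B) ` {B. A \<subseteq> B \<and> B \<subseteq> I \<and> card B = card I - r}"
      then obtain B where B: "A \<subseteq> B" "B \<subseteq> I" "card B = card I - r" and C: "C = I - B"
        by blast
      have "card C = r" unfolding C using card_compl[OF B(2)] B(3) r by simp
      then show "C \<in> {C. C \<subseteq> I - A \<and> card C = r}" using B(1) C by blast
    qed
    show "(\<lambda>C. I - C) ` {C. C \<subseteq> I - A \<and> card C = r}
        \<subseteq> {B. A \<subseteq> B \<and> B \<subseteq> I \<and> card B = card I - r}"
    proof
      fix B assume "B \<in> (\<lambda>C. I - C) ` {C. C \<subseteq> I - A \<and> card C = r}"
      then obtain C where C: "C \<subseteq> I - A" "card C = r" and B: "B = I - C" by blast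
      have "card B = card I - r" unfolding B using card_compl C by blast
      then show "B \<in> {B. A \<subseteq> B \<and> B \<subseteq> I \<and> card B = card I - r}" using A C B by blast
    qed
  qed auto
  then have "card {B. A \<subseteq> B \<and> B \<subseteq> I \<and> card B = card I - r} = card {C. C \<subseteq> I - A \<and> card C = r}"
    by (rule bij_betw_same_card)
  also have "\<dots> = (card I - card A) choose r"
    using n_subsets[of "I - A" r] I A card_compl by simp
  finally show ?thesis .
qed

theorem lemma2:
  fixes U :: "'a set" and n r :: nat and A :: "bool list set"
  assumes "n \<ge> 1" and "finite U" and "card U = r" and "r \<ge> 1"
    and "A \<subseteq> Idx n" and "2 ^ n - card A > r"
  defines "Y \<equiv> sol U n (ortho_sys n A)"
    and "YB \<equiv> \<lambda>B. sol U n (ortho_sys n B)"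
    and "Bs \<equiv> {B. A \<subseteq> B \<and> B \<subseteq> Idx n \<and> card B = 2 ^ n - r}"
  shows "Y = (\<Union>B \<in> Bs. YB B)
    \<and> (\<forall>B \<in> Bs. irreducible_alg U n (YB B))
    \<and> (\<forall>B \<in> Bs. \<forall>B' \<in> Bs. B \<noteq> B' \<longrightarrow> \<not> YB B \<subseteq> YB B')
    \<and> irreducible_components U n Y = YB ` Bs
    \<and> card (irreducible_components U n Y) = (2 ^ n - card A) choose r"
proof -
  have Bs: "B \<subseteq> Idx n" "card (Idx n - B) = r" if "B \<in> Bs" for B
  proof -
    show "B \<subseteq> Idx n" using that by (simp add: Bs_def)
    then show "card (Idx n - B) = r"
      using that assms(6) card_Diff_subset[OF finite_subset[OF _ finite_Idx]] card_Idx
      by (simp add: Bs_def)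
  qed
  have "card (Idx n - A) = 2 ^ n - card A"
    using card_Diff_subset[OF finite_subset[OF assms(5) finite_Idx] assms(5)] card_Idx by simp
  then have union: "Y = (\<Union>B \<in> Bs. YB B)"
    unfolding Y_def YB_def Bs_def
    using sol_ortho_sys_eq_Union[OF assms(2,5)] assms(3,6) by simp
  have irreducible: "\<forall>B \<in> Bs. irreducible_alg U n (YB B)"
    unfolding YB_def using irreducible_sol_ortho_sys[OF Bs(1) assms(2)] Bs(2) assms(3) by simp
  have incomparable: "\<forall>B \<in> Bs. \<forall>B' \<in> Bs. B \<noteq> B' \<longrightarrow> \<not> YB B \<subseteq> YB B'"
  proof (intro ballI impI)
    fix B B' assume "B \<in> Bs" "B' \<in> Bs" "B \<noteq> B'"
    moreover have "U \<noteq> {}" using assms(3,4) by auto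
    ultimately show "\<not> YB B \<subseteq> YB B'"
      unfolding YB_def by (intro sol_ortho_sys_incomparable) (simp_all add: Bs_def)
  qed
  have "finite Bs" using finite_Idx by (simp add: Bs_def)
  note components = irreducible_components_image[OF this union irreducible incomparable]
  have "card Bs = (2 ^ n - card A) choose r"
    unfolding Bs_def using card_supersets_of_card[OF finite_Idx assms(5), of r] assms(6)
    by (simp add: card_Idx)
  then show ?thesis using union irreducible incomparable components by simp
qed

end
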